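(* Let $\gamma_X=(X,d_X(\cdot))$ be any $l$-Lipschitz dynamic metric space and let $\alpha\in(0,\infty)$. Then $d_{\mathtt{dyn}}(\gamma_X,\gamma_X^\alpha)\le l\alpha$.
   Context: A dynamic metric space (DMS) is a pair $\gamma_X=(X,d_X(\cdot))$ where $X$ is a nonempty finite set and $d_X(\cdot):\mathbf{R}\times X\times X\to\mathbf{R}_+$ satisfies: each $d_X(t)$ is a pseudometric, some $d_X(t_0)$ is a metric, and $t\mapsto d_X(t)(x,x')$ is continuous for all $x,x'$. It is $l$-Lipschitz if each $t\mapsto d_X(t)(x,x')$ is $l$-Lipschitz. For $t\in\mathbf{R}$, $\lfloor t\rfloor_\alpha$ is the greatest element of $\alpha\mathbf{Z}$ not exceeding $t$. The $\alpha$-discretization $\gamma_X^\alpha$ is the family $(X,d_X^{\alpha\mathbf{Z}}(t))_{t\in\mathbf{R}}$ with $d_X^{\alpha\mathbf{Z}}(t):=d_X(\lfloor t\rfloor_\alpha)$. For families $\gamma_X=(X,d_X(\cdot))$, $\gamma_Y=(Y,d_Y(\cdot))$ of pseudometrics on finite sets indexed by $t\in\mathbf{R}$ (such as DMSs and their discretizations), let $(\bigvee_I d_X)(x,x'):=\min_{s\in I}d_X(s)(x,x')$ for closed intervals $I$, and $[t]^\varepsilon=[t-\varepsilon,t+\varepsilon]$. A tripod between $X,Y$ is a set $Z$ with surjections $\varphi_X:Z\to X$, $\varphi_Y:Z\to Y$; it is an $\varepsilon$-tripod if for all $t$, $z,z'$: $(\bigvee_{[t]^\varepsilon}d_X)(\varphi_X(z),\varphi_X(z'))\le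 d_Y(t)(\varphi_Y(z),\varphi_Y(z'))+2\varepsilon$ and $(\bigvee_{[t]^\varepsilon}d_Y)(\varphi_Y(z),\varphi_Y(z'))\le d_X(t)(\varphi_X(z),\varphi_X(z'))+2\varepsilon$. $d_{\mathtt{dyn}}(\gamma_X,\gamma_Y)$ is the minimum over tripods of the infimum of $\varepsilon$ for which the tripod is an $\varepsilon$-tripod. *)

theory Defs
  imports "HOL-Analysis.Analysis"
begin

definition pseudometric_on :: "'a set \<Rightarrow> ('a \<Rightarrow> 'a \<Rightarrow> real) \<Rightarrow> bool" where
  "pseudometric_on X d \<longleftrightarrow>
     (\<forall>x\<in>X. \<forall>y\<in>X. d x y \<ge> 0) \<and>
     (\<forall>x\<in>X. d x x = 0) \<and>
     (\<forall>x\<in>X. \<forall>y\<in>X. d x y = d y x) \<and>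
     (\<forall>x\<in>X. \<forall>y\<in>X. \<forall>z\<in>X. d x z \<le> d x y + d y z)"

definition metric_on :: "'a set \<Rightarrow> ('a \<Rightarrow> 'a \<Rightarrow> real) \<Rightarrow> bool" where
  "metric_on X d \<longleftrightarrow> pseudometric_on X d \<and> (\<forall>x\<in>X. \<forall>y\<in>X. d x y = 0 \<longrightarrow> x = y)"

definition dms :: "'a set \<Rightarrow> (real \<Rightarrow> 'a \<Rightarrow> 'a \<Rightarrow> real) \<Rightarrow> bool" where
  "dms X d \<longleftrightarrow> finite X \<and> X \<noteq> {} \<and>
     (\<forall>t. pseudometric_on X (d t)) \<and>
     (\<exists>t0. metric_on X (d t0)) \<and>
     (\<forall>x\<in>X. \<forall>x'\<in>X. continuous_on UNIV (\<lambda>t. d t x x'))"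

definition lipschitz_dms :: "real \<Rightarrow> 'a set \<Rightarrow> (real \<Rightarrow> 'a \<Rightarrow> 'a \<Rightarrow> real) \<Rightarrow> bool" where
  "lipschitz_dms l X d \<longleftrightarrow> dms X d \<and>
     (\<forall>x\<in>X. \<forall>x'\<in>X. \<forall>s t. \<bar>d s x x' - d t x x'\<bar> \<le> l * \<bar>s - t\<bar>)"

definition floor_grid :: "real \<Rightarrow> real \<Rightarrow> real" where
  "floor_grid \<alpha> t = \<alpha> * of_int \<lfloor>t / \<alpha>\<rfloor>"

definition discretize :: "real \<Rightarrow> (real \<Rightarrow> 'a \<Rightarrow> 'a \<Rightarrow> real) \<Rightarrow> (real \<Rightarrow> 'a \<Rightarrow> 'a \<Rightarrow> real)" where
  "discretize \<alpha> d = (\<lambda>t. d (floor_grid \<alpha> t))"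

definition smear :: "(real \<Rightarrow> 'a \<Rightarrow> 'a \<Rightarrow> real) \<Rightarrow> real \<Rightarrow> real \<Rightarrow> 'a \<Rightarrow> 'a \<Rightarrow> real" where
  "smear d t \<epsilon> x x' = Inf ((\<lambda>s. d s x x') ` {t - \<epsilon> .. t + \<epsilon>})"

definition tripod :: "'z set \<Rightarrow> ('z \<Rightarrow> 'a) \<Rightarrow> ('z \<Rightarrow> 'b) \<Rightarrow> 'a set \<Rightarrow> 'b set \<Rightarrow> bool" where
  "tripod Z fX fY X Y \<longleftrightarrow> fX ` Z = X \<and> fY ` Z = Y"

definition eps_tripod ::
  "real \<Rightarrow> 'z set \<Rightarrow> ('z \<Rightarrow> 'a) \<Rightarrow> ('z \<Rightarrow> 'b) \<Rightarrow> 'a set \<Rightarrow> (real \<Rightarrow> 'a \<Rightarrow> 'a \<Rightarrow> real)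
     \<Rightarrow> 'b set \<Rightarrow> (real \<Rightarrow> 'b \<Rightarrow> 'b \<Rightarrow> real) \<Rightarrow> bool" where
  "eps_tripod \<epsilon> Z fX fY X dX Y dY \<longleftrightarrow> tripod Z fX fY X Y \<and> \<epsilon> \<ge> 0 \<and>
     (\<forall>t. \<forall>z\<in>Z. \<forall>z'\<in>Z.
        smear dX t \<epsilon> (fX z) (fX z') \<le> dY t (fY z) (fY z') + 2 * \<epsilon> \<and>
        smear dY t \<epsilon> (fY z) (fY z') \<le> dX t (fX z) (fX z') + 2 * \<epsilon>)"

text \<open>Dynamic GH distance (value in extended reals; \<infinity> if no \<epsilon> works).
  Tripods are taken with Z a set of pairs in X x Y; this loses no generality since
  every tripod can be replaced by the image of (fX, fY) without changing the conditions.\<close>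
definition d_dyn :: "'a set \<Rightarrow> (real \<Rightarrow> 'a \<Rightarrow> 'a \<Rightarrow> real) \<Rightarrow> 'b set \<Rightarrow> (real \<Rightarrow> 'b \<Rightarrow> 'b \<Rightarrow> real) \<Rightarrow> ereal" where
  "d_dyn X dX Y dY =
     (INF Z \<in> {Z. tripod Z fst snd X Y}.
        Inf (ereal ` {\<epsilon>. eps_tripod \<epsilon> Z fst snd X dX Y dY}))"

end

theory Submission
  imports Defs
begin

text \<open>The diagonal tripod already works: discretization shifts time by less than \<alpha>, so by
  the Lipschitz condition every distance moves by at most l\<alpha>; and the smeared distance over
  [t]^\<epsilon> never exceeds the distance at t itself.\<close>

lemma floor_grid_le:
  assumes "\<alpha> > 0"
  shows "floor_grid \<alpha> t \<le> t"
proof -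
  have "\<alpha> * of_int \<lfloor>t / \<alpha>\<rfloor> \<le> \<alpha> * (t / \<alpha>)"
    using assms by (intro mult_left_mono) auto
  then show ?thesis using assms by (simp add: floor_grid_def)
qed

lemma floor_grid_gt:
  assumes "\<alpha> > 0"
  shows "t - \<alpha> < floor_grid \<alpha> t"
proof -
  have "\<alpha> * (t / \<alpha> - 1) < \<alpha> * of_int \<lfloor>t / \<alpha>\<rfloor>"
    using assms by (intro mult_strict_left_mono) linarith+
  then show ?thesis using assms by (simp add: floor_grid_def right_diff_distrib)
qed

lemma lipschitz_dms_nonneg:
  assumes "lipschitz_dms l X d"
  shows "l \<ge> 0"
proof -
  obtain x where "x \<in> X"
    using assms unfolding lipschitz_dms_def dms_def by auto
  then have "\<bar>d 1 x x - d 0 x x\<bar> \<le> l * \<bar>1 - 0\<bar>"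
    using assms unfolding lipschitz_dms_def by blast
  then show ?thesis by simp
qed

lemma dms_nonneg:
  assumes "dms X d" "x \<in> X" "x' \<in> X"
  shows "d t x x' \<ge> 0"
  using assms unfolding dms_def pseudometric_on_def by blast

lemma lipschitz_dms_discretize_dist:
  assumes "lipschitz_dms l X d" "\<alpha> > 0" "x \<in> X" "x' \<in> X"
  shows "\<bar>d t x x' - discretize \<alpha> d t x x'\<bar> \<le> l * \<alpha>"
proof -
  have "\<bar>d t x x' - d (floor_grid \<alpha> t) x x'\<bar> \<le> l * \<bar>t - floor_grid \<alpha> t\<bar>"
    using assms unfolding lipschitz_dms_def by blast
  also have "\<dots> \<le> l * \<alpha>"
    using floor_grid_le[of \<alpha> t] floor_grid_gt[of \<alpha> t] assms(2)
      lipschitz_dms_nonneg[OF assms(1)]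
    by (intro mult_left_mono) auto
  finally show ?thesis by (simp add: discretize_def)
qed

lemma smear_le:
  assumes "\<And>s. f s x x' \<ge> 0" "\<epsilon> \<ge> 0"
  shows "smear f t \<epsilon> x x' \<le> f t x x'"
  unfolding smear_def
  by (rule cInf_lower) (use assms in \<open>auto intro!: bdd_belowI[where m=0]\<close>)

lemma eps_tripod_Id_on:
  assumes "\<epsilon> \<ge> 0"
    and nonneg: "\<And>s x x'. x \<in> X \<Longrightarrow> x' \<in> X \<Longrightarrow> dX s x x' \<ge> 0 \<and> dY s x x' \<ge> 0"
    and close: "\<And>t x x'. x \<in> X \<Longrightarrow> x' \<in> X \<Longrightarrow> \<bar>dX t x x' - dY t x x'\<bar> \<le> 2 * \<epsilon>"
  shows "eps_tripod \<epsilon> (Id_on X) fst snd X dX X dY"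
  unfolding eps_tripod_def tripod_def
proof (intro conjI allI ballI \<open>\<epsilon> \<ge> 0\<close>)
  fix t z z' assume "z \<in> Id_on X" "z' \<in> Id_on X"
  then obtain x x' where xx: "x \<in> X" "x' \<in> X" "z = (x, x)" "z' = (x', x')"
    by auto
  have "smear dX t \<epsilon> x x' \<le> dX t x x'" "smear dY t \<epsilon> x x' \<le> dY t x x'"
    using nonneg xx \<open>\<epsilon> \<ge> 0\<close> by (auto intro: smear_le)
  with close[OF xx(1,2), of t] xx(3,4)
  show "smear dX t \<epsilon> (fst z) (fst z') \<le> dY t (snd z) (snd z') + 2 * \<epsilon>"
    and "smear dY t \<epsilon> (snd z) (snd z') \<le> dX t (fst z) (fst z') + 2 * \<epsilon>"
    by auto
qed force+

lemma d_dyn_le_eps_tripod: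
  assumes "eps_tripod \<epsilon> Z fst snd X dX Y dY"
  shows "d_dyn X dX Y dY \<le> ereal \<epsilon>"
proof -
  have "Inf (ereal ` {\<epsilon>. eps_tripod \<epsilon> Z fst snd X dX Y dY}) \<le> ereal \<epsilon>"
    using assms by (intro Inf_lower) auto
  then show ?thesis
    using assms unfolding d_dyn_def eps_tripod_def by (intro INF_lower2[of Z]) auto
qed

theorem propositionA3:
  fixes X :: "'a set" and d :: "real \<Rightarrow> 'a \<Rightarrow> 'a \<Rightarrow> real" and l \<alpha> :: real
  assumes "lipschitz_dms l X d" and "\<alpha> > 0"
  shows "d_dyn X d X (discretize \<alpha> d) \<le> ereal (l * \<alpha>)"
proof (rule d_dyn_le_eps_tripod)
  have dms: "dms X d"
    using assms(1) unfolding lipschitz_dms_def by blast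
  have "l * \<alpha> \<ge> 0"
    using lipschitz_dms_nonneg[OF assms(1)] assms(2) by simp
  moreover have "\<bar>d t x x' - discretize \<alpha> d t x x'\<bar> \<le> 2 * (l * \<alpha>)"
    if "x \<in> X" "x' \<in> X" for t x x'
    using lipschitz_dms_discretize_dist[OF assms that, of t] \<open>l * \<alpha> \<ge> 0\<close> by linarith
  ultimately show "eps_tripod (l * \<alpha>) (Id_on X) fst snd X d X (discretize \<alpha> d)"
    using dms_nonneg[OF dms] by (intro eps_tripod_Id_on) (auto simp: discretize_def)
qed

end
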